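(* For every positive integer $n$, $C_S(x^n y^n) = K[x^n y^n]$.
   Context: Standing conventions: $K$ is a field, $R = K[y]$, $\sigma$ is a $K$-algebra endomorphism of $R$ with $\deg_y(\sigma(y)) > 1$, and $\delta$ is a $K$-linear $\sigma$-derivation of $R$ ($\delta(ab) = \sigma(a)\delta(b) + \delta(a)b$). $S = R[x;\sigma,\delta]$ is the Ore extension (polynomials $\sum r_i x^i$, $r_i\in R$, with $xr = \sigma(r)x + \delta(r)$). $C_S(P)$ is the centralizer of $P$ in $S$, and $K[P] = \{\sum_i c_i P^i : c_i \in K\}$. *)

theory Defs
  imports "HOL-Computational_Algebra.Polynomial"
begin

text \<open>R = K[y] is the type 'a poly (variable y = [:0,1:]).
  Elements of the Ore extension S = R[x; sigma, delta] are represented as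
  'a poly poly: the polynomial  sum_i r_i x^i  (coefficients written on the left)
  is the 'a poly poly whose i-th coefficient is r_i.\<close>

definition K_alg_endo :: "('a::field poly \<Rightarrow> 'a poly) \<Rightarrow> bool" where
  "K_alg_endo \<sigma> \<longleftrightarrow>
     (\<forall>p q. \<sigma> (p + q) = \<sigma> p + \<sigma> q) \<and>
     (\<forall>p q. \<sigma> (p * q) = \<sigma> p * \<sigma> q) \<and>
     \<sigma> 1 = 1 \<and>
     (\<forall>c p. \<sigma> (smult c p) = smult c (\<sigma> p))"

definition K_linear_sigma_derivation ::
  "('a::field poly \<Rightarrow> 'a poly) \<Rightarrow> ('a poly \<Rightarrow> 'a poly) \<Rightarrow> bool" where
  "K_linear_sigma_derivation \<sigma> \<delta> \<longleftrightarrow>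
     (\<forall>p q. \<delta> (p + q) = \<delta> p + \<delta> q) \<and>
     (\<forall>c p. \<delta> (smult c p) = smult c (\<delta> p)) \<and>
     (\<forall>a b. \<delta> (a * b) = \<sigma> a * \<delta> b + \<delta> a * b)"

text \<open>Left multiplication by x:  x * (sum_j r_j x^j) = sum_j (sigma(r_j) x^(j+1) + delta(r_j) x^j).\<close>
definition ore_xmul :: "('a::field poly \<Rightarrow> 'a poly) \<Rightarrow> ('a poly \<Rightarrow> 'a poly)
    \<Rightarrow> 'a poly poly \<Rightarrow> 'a poly poly" where
  "ore_xmul \<sigma> \<delta> p = pCons 0 (map_poly \<sigma> p) + map_poly \<delta> p"

text \<open>The element x^i r of S, expanded in the left normal form.\<close>
definition ore_xpow_mul :: "('a::field poly \<Rightarrow> 'a poly) \<Rightarrow> ('a poly \<Rightarrow> 'a poly)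
    \<Rightarrow> nat \<Rightarrow> 'a poly \<Rightarrow> 'a poly poly" where
  "ore_xpow_mul \<sigma> \<delta> i r = (ore_xmul \<sigma> \<delta> ^^ i) [:r:]"

text \<open>Multiplication in S:  (sum_i a_i x^i)(sum_j b_j x^j) = sum_{i,j} a_i (x^i b_j) x^j.\<close>
definition ore_mult :: "('a::field poly \<Rightarrow> 'a poly) \<Rightarrow> ('a poly \<Rightarrow> 'a poly)
    \<Rightarrow> 'a poly poly \<Rightarrow> 'a poly poly \<Rightarrow> 'a poly poly" where
  "ore_mult \<sigma> \<delta> p q =
     (\<Sum>i\<le>degree p. \<Sum>j\<le>degree q.
        smult (coeff p i) (ore_xpow_mul \<sigma> \<delta> i (coeff q j)) * monom 1 j)"

definition ore_power :: "('a::field poly \<Rightarrow> 'a poly) \<Rightarrow> ('a poly \<Rightarrow> 'a poly)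
    \<Rightarrow> 'a poly poly \<Rightarrow> nat \<Rightarrow> 'a poly poly" where
  "ore_power \<sigma> \<delta> P k = (ore_mult \<sigma> \<delta> P ^^ k) 1"

definition ore_centralizer :: "('a::field poly \<Rightarrow> 'a poly) \<Rightarrow> ('a poly \<Rightarrow> 'a poly)
    \<Rightarrow> 'a poly poly \<Rightarrow> 'a poly poly set" where
  "ore_centralizer \<sigma> \<delta> P = {Q. ore_mult \<sigma> \<delta> Q P = ore_mult \<sigma> \<delta> P Q}"

definition ore_K_poly_in :: "('a::field poly \<Rightarrow> 'a poly) \<Rightarrow> ('a poly \<Rightarrow> 'a poly)
    \<Rightarrow> 'a poly poly \<Rightarrow> 'a poly poly set" where
  "ore_K_poly_in \<sigma> \<delta> P =
     {Q. \<exists>(c::nat \<Rightarrow> 'a) m. Q = (\<Sum>i\<le>m. smult [:c i:] (ore_power \<sigma> \<delta> P i))}"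

end

theory Submission
  imports Defs "HOL-Number_Theory.Cong"
begin

text \<open>The \<open>x\<close>-degree on \<open>S\<close> is additive and the leading coefficient of \<open>P Q\<close> is
  \<open>lc P \<cdot> \<sigma>\<^bsup>deg P\<^esup> (lc Q)\<close>, because \<open>\<sigma>\<close> is injective and multiplies \<open>y\<close>-degrees by
  \<open>d = deg \<sigma>(y) \<ge> 2\<close>. If \<open>Q\<close> of degree \<open>m\<close> commutes with \<open>P = x\<^sup>n y\<^sup>n\<close>, whose leading
  coefficient is \<open>\<sigma>\<^sup>n(y\<^sup>n)\<close>, then \<open>a = lc Q\<close> satisfies \<open>a \<sigma>\<^sup>m(lc P) = lc P \<sigma>\<^sup>n(a)\<close>.
  Comparing \<open>y\<close>-degrees gives \<open>(d\<^sup>n - 1) deg a = n d\<^sup>n (d\<^sup>m - 1)\<close>, which forces \<open>n\<close> to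
  divide \<open>m\<close>: otherwise \<open>d\<^sup>n - 1\<close> would divide \<open>n (d\<^sup>g - 1)\<close> for \<open>g = gcd n m \<le> n/2\<close>,
  which is too small. The same equation determines \<open>a\<close> up to a scalar, and \<open>P\<^bsup>m/n\<^esup>\<close> has
  degree \<open>m\<close> and commutes with \<open>P\<close>; so subtracting a scalar multiple of it lowers the
  degree of \<open>Q\<close>, and induction on the degree shows \<open>Q \<in> K[P]\<close>.\<close>

section \<open>Numbers of the form \<open>d ^ n - 1\<close>\<close>

lemma power_cong_power_mod:
  fixes d :: nat
  assumes "d \<ge> 1"
  shows "[d ^ a = d ^ (a mod b)] (mod d ^ b - 1)"
proof -
  have "[d ^ b = 1] (mod d ^ b - 1)"
    using assms by (simp add: cong_def le_mod_geq)
  then have "[(d ^ b) ^ (a div b) * d ^ (a mod b) = 1 ^ (a div b) * d ^ (a mod b)] (mod d ^ b - 1)"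
    by (intro cong_mult cong_pow cong_refl)
  then show ?thesis
    by (simp flip: power_mult power_add)
qed

lemma gcd_power_minus_one:
  fixes d :: nat
  shows "gcd (d ^ a - 1) (d ^ b - 1) = d ^ gcd a b - 1"
proof (cases "d = 0")
  case True
  then show ?thesis by (simp add: zero_power2 power_0_left)
next
  case False
  then show ?thesis
  proof (induction a b rule: gcd_nat_induct)
    case (step a b)
    have "[d ^ a - 1 = d ^ (a mod b) - 1] (mod d ^ b - 1)"
      using step.prems by (intro cong_diff_nat power_cong_power_mod cong_refl) simp_all
    then have "gcd (d ^ a - 1) (d ^ b - 1) = gcd (d ^ (a mod b) - 1) (d ^ b - 1)"
      by (rule cong_gcd_eq)
    also have "\<dots> = d ^ gcd a b - 1"
      using step by (simp add: gcd.commute gcd_red_nat[symmetric])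
    finally show ?case .
  qed simp
qed

lemma proper_divisor_power_minus_one_less:
  fixes d n g :: nat
  assumes d: "d \<ge> 2" and g: "g dvd n" "0 < g" "g < n"
  shows "n * (d ^ g - 1) < d ^ n - 1"
proof -
  obtain t where t: "n = g * t" using g(1) by (rule dvdE)
  with g have "t \<noteq> 0" "t \<noteq> 1" by auto
  then have "2 * g \<le> n" using t by (simp add: mult.commute[of g])
  define k where "k = n - g"
  have nk: "n = g + k" "n \<le> 2 * k" using \<open>2 * g \<le> n\<close> by (simp_all add: k_def)
  have dg: "d ^ g \<ge> 2" "d ^ k \<ge> 2"
    using d g(2) \<open>2 * g \<le> n\<close> nk by (simp_all add: le_trans[OF _ power_increasing[of 1]])
  have "n \<le> d ^ k"
  proof -
    have "2 * k \<le> 2 ^ k"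
      using less_exp[of k] by (induction k) simp_all
    also have "\<dots> \<le> d ^ k" using d by (simp add: power_mono)
    finally show ?thesis using nk by simp
  qed
  then have "n * (d ^ g - 1) \<le> d ^ k * (d ^ g - 1)" by simp
  also have "\<dots> = d ^ n - d ^ k" by (simp add: nk power_add diff_mult_distrib2 mult.commute)
  also have "\<dots> < d ^ n - 1"
  proof -
    have "d ^ k < d ^ n" using d dg nk by (simp add: power_add)
    with dg show ?thesis by linarith
  qed
  finally show ?thesis .
qed

lemma dvd_exponent_if_power_minus_one_dvd:
  fixes d n m :: nat
  assumes d: "d \<ge> 2" and n: "n \<ge> 1" and dvd: "d ^ n - 1 dvd n * (d ^ m - 1)"
  shows "n dvd m"
proof -
  define g where "g = gcd n m"
  have "g dvd n" "0 < g" using n by (simp_all add: g_def)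
  have "d ^ n - 1 dvd gcd (n * (d ^ n - 1)) (n * (d ^ m - 1))"
    using dvd by simp
  also have "gcd (n * (d ^ n - 1)) (n * (d ^ m - 1)) = n * (d ^ g - 1)"
    by (simp only: gcd_mult_distrib_nat[symmetric] gcd_power_minus_one g_def)
  finally have "d ^ n - 1 dvd n * (d ^ g - 1)" .
  moreover have "1 < d ^ g"
    using d \<open>0 < g\<close> by (intro one_less_power) simp_all
  ultimately have "d ^ n - 1 \<le> n * (d ^ g - 1)"
    using n by (intro dvd_imp_le) simp_all
  then have "\<not> g < n"
    using proper_divisor_power_minus_one_less[OF d \<open>g dvd n\<close> \<open>0 < g\<close>] by linarith
  moreover have "g \<le> n" using \<open>g dvd n\<close> n by (simp add: dvd_imp_le)
  ultimately have "g = n" by simp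
  then show ?thesis by (metis g_def gcd_dvd2)
qed

section \<open>Multiplication in the Ore extension\<close>

lemma coeff_mult_monom_one:
  "coeff (p * monom 1 j) k = (if k < j then 0 else coeff (p :: 'a::comm_semiring_1 poly) (k - j))"
  by (simp add: mult.commute[of _ "monom 1 j"] coeff_monom_mult)

lemma smult_sum_right: "smult a (\<Sum>i\<in>A. f i) = (\<Sum>i\<in>A. smult a (f i))"
  by (induction A rule: infinite_finite_induct) (auto simp: smult_add_right)

lemma degree_diff_less_if_lead_coeff_eq:
  fixes p q :: "'a::ab_group_add poly"
  assumes "degree p = degree q" "lead_coeff p = lead_coeff q" "p \<noteq> q"
  shows "degree (p - q) < degree p"
proof -
  have "degree (p - q) \<le> degree p"
    using assms(1) degree_diff_le_max[of p q] by simp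
  moreover have "coeff (p - q) (degree p) = 0"
    using assms(1,2) by simp
  ultimately show ?thesis
    using assms(3) by (metis diff_eq_eq leading_coeff_0_iff add.left_neutral le_neq_implies_less)
qed

locale ore_extension =
  fixes \<sigma> \<delta> :: "'a::field poly \<Rightarrow> 'a poly"
  assumes endo: "K_alg_endo \<sigma>" and der: "K_linear_sigma_derivation \<sigma> \<delta>"
begin

abbreviation xmul :: "'a poly poly \<Rightarrow> 'a poly poly" where
  "xmul \<equiv> ore_xmul \<sigma> \<delta>"

abbreviation times_ore :: "'a poly poly \<Rightarrow> 'a poly poly \<Rightarrow> 'a poly poly" (infixl "\<star>" 70) where
  "p \<star> q \<equiv> ore_mult \<sigma> \<delta> p q"

lemma endo_add: "\<sigma> (p + q) = \<sigma> p + \<sigma> q"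
  and endo_mult: "\<sigma> (p * q) = \<sigma> p * \<sigma> q"
  and endo_one: "\<sigma> 1 = 1"
  and endo_smult: "\<sigma> (smult c p) = smult c (\<sigma> p)"
  using endo by (simp_all add: K_alg_endo_def)

lemma endo_zero [simp]: "\<sigma> 0 = 0"
  using endo_smult[of 0 0] by simp

lemma endo_diff: "\<sigma> (p - q) = \<sigma> p - \<sigma> q"
  using endo_add[of "p - q" q] by (simp add: eq_diff_eq)

lemma endo_const: "\<sigma> [:c:] = [:c:]"
  using endo_smult[of c 1] endo_one by simp

lemma endo_eq_pcompose: "\<sigma> p = pcompose p (\<sigma> [:0, 1:])"
proof (induction p)
  case (pCons a p)
  have "pCons a p = [:a:] + [:0, 1:] * p" by simp
  then have "\<sigma> (pCons a p) = [:a:] + \<sigma> [:0, 1:] * \<sigma> p"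
    by (metis endo_add endo_mult endo_const)
  with pCons show ?case by (simp add: pcompose_pCons)
qed simp

lemma der_add: "\<delta> (p + q) = \<delta> p + \<delta> q"
  and der_smult: "\<delta> (smult c p) = smult c (\<delta> p)"
  and der_mult: "\<delta> (p * q) = \<sigma> p * \<delta> q + \<delta> p * q"
  using der by (simp_all add: K_linear_sigma_derivation_def)

lemma der_zero [simp]: "\<delta> 0 = 0"
  using der_smult[of 0 0] by simp

lemma der_diff: "\<delta> (p - q) = \<delta> p - \<delta> q"
  using der_add[of "p - q" q] by (simp add: eq_diff_eq)

lemma der_one: "\<delta> 1 = 0"
proof -
  have "\<delta> 1 + \<delta> 1 = \<delta> 1 + 0"
    using der_mult[of 1 1] by (simp add: endo_one)
  then show ?thesis by (rule add_left_imp_eq)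
qed

lemma der_const: "\<delta> [:c:] = 0"
  using der_smult[of c 1] der_one by simp

lemma coeff_xmul:
  "coeff (xmul p) k = (case k of 0 \<Rightarrow> 0 | Suc j \<Rightarrow> \<sigma> (coeff p j)) + \<delta> (coeff p k)"
  by (simp add: ore_xmul_def coeff_map_poly coeff_pCons split: nat.split)

lemma xmul_zero [simp]: "xmul 0 = 0"
  by (simp add: ore_xmul_def)

lemma xmul_add: "xmul (p + q) = xmul p + xmul q"
  by (rule poly_eqI) (simp add: coeff_xmul endo_add der_add split: nat.split)

lemma xmul_diff: "xmul (p - q) = xmul p - xmul q"
  by (rule poly_eqI) (simp add: coeff_xmul endo_diff der_diff split: nat.split)

lemma xmul_smult: "xmul (smult a p) = smult (\<sigma> a) (xmul p) + smult (\<delta> a) p"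
  by (rule poly_eqI) (simp add: coeff_xmul endo_mult der_mult algebra_simps split: nat.split)

lemma xmul_sum: "xmul (\<Sum>i\<in>A. f i) = (\<Sum>i\<in>A. xmul (f i))"
  by (induction A rule: infinite_finite_induct) (auto simp: xmul_add)

lemma xmul_mult_monom: "xmul (p * monom 1 j) = xmul p * monom 1 j"
proof (rule poly_eqI)
  fix k
  show "coeff (xmul (p * monom 1 j)) k = coeff (xmul p * monom 1 j) k"
  proof (cases "k < j")
    case True
    then show ?thesis
      by (simp add: coeff_xmul coeff_mult_monom_one split: nat.split)
  next
    case False
    then obtain t where t: "k = j + t" by (metis le_add_diff_inverse not_less)
    then show ?thesis
      by (cases t; cases j) (simp_all add: coeff_xmul coeff_mult_monom_one)
  qed
qed

lemma xmul_monom_one: "xmul (monom 1 i) = monom 1 (Suc i)"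
  by (rule poly_eqI) (auto simp: coeff_xmul coeff_monom endo_one der_one split: nat.split)

lemma funpow_xmul_add: "(xmul ^^ k) (p + q) = (xmul ^^ k) p + (xmul ^^ k) q"
  by (induction k) (auto simp: xmul_add)

lemma funpow_xmul_diff: "(xmul ^^ k) (p - q) = (xmul ^^ k) p - (xmul ^^ k) q"
  by (induction k) (auto simp: xmul_diff)

lemma funpow_xmul_zero [simp]: "(xmul ^^ k) 0 = 0"
  by (induction k) simp_all

lemma funpow_xmul_sum: "(xmul ^^ k) (\<Sum>i\<in>A. f i) = (\<Sum>i\<in>A. (xmul ^^ k) (f i))"
  by (induction A rule: infinite_finite_induct) (auto simp: funpow_xmul_add)

lemma funpow_xmul_smult_const: "(xmul ^^ k) (smult [:c:] p) = smult [:c:] ((xmul ^^ k) p)"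
  by (induction k) (auto simp: xmul_smult endo_const der_const)

lemma funpow_xmul_mult_monom: "(xmul ^^ k) (p * monom 1 j) = (xmul ^^ k) p * monom 1 j"
  by (induction k) (auto simp: xmul_mult_monom)

lemma funpow_xmul_one: "(xmul ^^ i) 1 = monom 1 i"
proof (induction i)
  case 0
  show ?case by (simp add: monom_0 one_pCons)
next
  case (Suc i)
  then show ?case using xmul_monom_one[of i] by simp
qed

text \<open>Left multiplication by \<open>x\<^sup>i\<close> is \<open>xmul ^^ i\<close>, so the product is linear over \<open>R\<close> in
  its left factor; associativity follows from \<open>(x p) q = x (p q)\<close>.\<close>

lemma ore_mult_conv_xmul: "p \<star> q = (\<Sum>i\<le>degree p. smult (coeff p i) ((xmul ^^ i) q))"
proof -
  have "(xmul ^^ i) q = (\<Sum>j\<le>degree q. ore_xpow_mul \<sigma> \<delta> i (coeff q j) * monom 1 j)" for i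
  proof -
    have "q = (\<Sum>j\<le>degree q. [:coeff q j:] * monom 1 j)"
      by (simp add: smult_monom poly_as_sum_of_monoms)
    then have "(xmul ^^ i) q = (\<Sum>j\<le>degree q. (xmul ^^ i) ([:coeff q j:] * monom 1 j))"
      by (metis funpow_xmul_sum)
    then show ?thesis
      by (simp only: funpow_xmul_mult_monom ore_xpow_mul_def)
  qed
  then show ?thesis
    unfolding ore_mult_def mult_smult_left by (simp add: smult_sum_right)
qed

lemma ore_mult_conv_xmul_bound:
  assumes "degree p < N"
  shows "p \<star> q = (\<Sum>i<N. smult (coeff p i) ((xmul ^^ i) q))"
  unfolding ore_mult_conv_xmul
  by (rule sum.mono_neutral_left) (use assms in \<open>auto simp: coeff_eq_0\<close>)

lemma ore_mult_zero_left [simp]: "0 \<star> q = 0"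
  and ore_mult_zero_right [simp]: "p \<star> 0 = 0"
  by (simp_all add: ore_mult_conv_xmul)

lemma ore_mult_add_left: "(p\<^sub>1 + p\<^sub>2) \<star> q = p\<^sub>1 \<star> q + p\<^sub>2 \<star> q"
proof -
  define N where "N = Suc (max (degree p\<^sub>1) (degree p\<^sub>2))"
  have "degree (p\<^sub>1 + p\<^sub>2) < N" "degree p\<^sub>1 < N" "degree p\<^sub>2 < N"
    using degree_add_le_max[of p\<^sub>1 p\<^sub>2] by (auto simp: N_def)
  then show ?thesis
    by (simp add: ore_mult_conv_xmul_bound[where N = N] smult_add_left sum.distrib)
qed

lemma ore_mult_smult_left: "smult a p \<star> q = smult a (p \<star> q)"
proof -
  have "degree (smult a p) < Suc (degree p)"
    using degree_smult_le[of a p] by simp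
  then show ?thesis
    by (simp add: ore_mult_conv_xmul_bound[where N = "Suc (degree p)"] smult_sum_right
        del: sum.lessThan_Suc)
qed

lemma ore_mult_diff_left: "(p\<^sub>1 - p\<^sub>2) \<star> q = p\<^sub>1 \<star> q - p\<^sub>2 \<star> q"
  using ore_mult_add_left[of p\<^sub>1 "- p\<^sub>2" q] ore_mult_smult_left[of "- 1" p\<^sub>2 q] by simp

lemma ore_mult_sum_left: "(\<Sum>i\<in>A. f i) \<star> q = (\<Sum>i\<in>A. f i \<star> q)"
  by (induction A rule: infinite_finite_induct) (auto simp: ore_mult_add_left)

lemma ore_mult_add_right: "p \<star> (q\<^sub>1 + q\<^sub>2) = p \<star> q\<^sub>1 + p \<star> q\<^sub>2"
  by (simp add: ore_mult_conv_xmul funpow_xmul_add smult_add_right sum.distrib)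

lemma ore_mult_diff_right: "p \<star> (q\<^sub>1 - q\<^sub>2) = p \<star> q\<^sub>1 - p \<star> q\<^sub>2"
  by (simp add: ore_mult_conv_xmul funpow_xmul_diff smult_diff_right sum_subtractf)

lemma ore_mult_sum_right: "p \<star> (\<Sum>i\<in>A. f i) = (\<Sum>i\<in>A. p \<star> f i)"
  by (induction A rule: infinite_finite_induct) (auto simp: ore_mult_add_right)

lemma ore_mult_smult_const_right: "p \<star> smult [:c:] q = smult [:c:] (p \<star> q)"
  by (simp add: ore_mult_conv_xmul funpow_xmul_smult_const smult_sum_right mult.commute)

lemma ore_mult_one_left: "1 \<star> q = q"
  by (simp add: ore_mult_conv_xmul)

lemma ore_mult_one_right: "p \<star> 1 = p"
  by (simp add: ore_mult_conv_xmul funpow_xmul_one smult_monom poly_as_sum_of_monoms)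

lemma ore_mult_xmul_left: "xmul r \<star> s = xmul (r \<star> s)"
proof -
  define N where "N = Suc (degree r)"
  have "degree (xmul r) < Suc N"
    by (rule le_imp_less_Suc, rule degree_le)
      (auto simp: N_def coeff_xmul coeff_eq_0 split: nat.split)
  then have "xmul r \<star> s = (\<Sum>i<Suc N. smult (coeff (xmul r) i) ((xmul ^^ i) s))"
    by (rule ore_mult_conv_xmul_bound)
  also have "\<dots> = (\<Sum>i<N. smult (\<sigma> (coeff r i)) ((xmul ^^ Suc i) s))
                  + (\<Sum>i<Suc N. smult (\<delta> (coeff r i)) ((xmul ^^ i) s))"
    by (simp only: coeff_xmul smult_add_left sum.distrib sum.lessThan_Suc_shift) simp
  also have "\<dots> = (\<Sum>i<N. xmul (smult (coeff r i) ((xmul ^^ i) s)))"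
    by (simp add: N_def coeff_eq_0 xmul_smult sum.distrib)
  also have "\<dots> = xmul (r \<star> s)"
    by (simp only: ore_mult_conv_xmul_bound[of r N] N_def lessI xmul_sum)
  finally show ?thesis .
qed

lemma ore_mult_funpow_xmul_left: "(xmul ^^ k) r \<star> s = (xmul ^^ k) (r \<star> s)"
  by (induction k) (auto simp: ore_mult_xmul_left)

lemma ore_mult_assoc: "(p \<star> q) \<star> s = p \<star> (q \<star> s)"
  unfolding ore_mult_conv_xmul[of p q] ore_mult_conv_xmul[of p "q \<star> s"]
  by (simp only: ore_mult_sum_left ore_mult_smult_left ore_mult_funpow_xmul_left)

abbreviation power_ore :: "'a poly poly \<Rightarrow> nat \<Rightarrow> 'a poly poly" (infixr "^\<star>" 80) where
  "P ^\<star> k \<equiv> ore_power \<sigma> \<delta> P k"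

lemma ore_power_0 [simp]: "P ^\<star> 0 = 1"
  and ore_power_Suc: "P ^\<star> Suc k = P \<star> P ^\<star> k"
  by (simp_all add: ore_power_def)

lemma ore_power_commute: "P ^\<star> k \<star> P = P \<star> P ^\<star> k"
  by (induction k) (simp_all add: ore_power_Suc ore_mult_assoc ore_mult_one_left ore_mult_one_right)

lemma K_poly_in_subset_centralizer: "ore_K_poly_in \<sigma> \<delta> P \<subseteq> ore_centralizer \<sigma> \<delta> P"
  by (auto simp: ore_K_poly_in_def ore_centralizer_def ore_mult_sum_left ore_mult_sum_right
      ore_mult_smult_left ore_mult_smult_const_right ore_power_commute)

lemma centralizer_diff_smult_power:
  "Q \<in> ore_centralizer \<sigma> \<delta> P \<Longrightarrow> Q - smult [:c:] (P ^\<star> k) \<in> ore_centralizer \<sigma> \<delta> P"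
  by (simp add: ore_centralizer_def ore_mult_diff_left ore_mult_diff_right
      ore_mult_smult_left ore_mult_smult_const_right ore_power_commute)

lemma K_poly_in_zero: "0 \<in> ore_K_poly_in \<sigma> \<delta> P"
  unfolding ore_K_poly_in_def by (intro CollectI exI[of _ "\<lambda>_. 0"] exI[of _ 0]) simp

lemma K_poly_in_add_smult_power:
  assumes "Q \<in> ore_K_poly_in \<sigma> \<delta> P"
  shows "Q + smult [:c:] (P ^\<star> k) \<in> ore_K_poly_in \<sigma> \<delta> P"
proof -
  obtain f m where Q: "Q = (\<Sum>i\<le>m. smult [:f i:] (P ^\<star> i))"
    using assms unfolding ore_K_poly_in_def by blast
  define g where "g i = (if i \<le> m then f i else 0) + (if i = k then c else 0)" for i
  define M where "M = max m k"
  have "(\<Sum>i\<le>M. smult [:g i:] (P ^\<star> i)) =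
      (\<Sum>i\<le>M. smult [:if i \<le> m then f i else 0:] (P ^\<star> i))
      + (\<Sum>i\<le>M. smult [:if i = k then c else 0:] (P ^\<star> i))"
  proof -
    have "smult [:x + y:] p = smult [:x:] p + smult [:y:] p" for x y and p :: "'a poly poly"
      using smult_add_left[of "[:x:]" "[:y:]" p] by simp
    then show ?thesis by (simp only: g_def sum.distrib)
  qed
  also have "(\<Sum>i\<le>M. smult [:if i \<le> m then f i else 0:] (P ^\<star> i)) = Q"
    unfolding Q by (rule sum.mono_neutral_cong_right) (auto simp: M_def)
  also have "(\<Sum>i\<le>M. smult [:if i = k then c else 0:] (P ^\<star> i)) = smult [:c:] (P ^\<star> k)"
    by (subst sum.mono_neutral_cong_right[where S = "{k}"]) (auto simp: M_def)
  finally show ?thesis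
    unfolding ore_K_poly_in_def by (intro CollectI exI) (rule sym)
qed

end

section \<open>Degrees, leading coefficients and centralizers\<close>

locale ore_extension_deg = ore_extension +
  assumes degree_endo_y_gt_1: "degree (\<sigma> [:0, 1:]) > 1"
begin

abbreviation d :: nat where
  "d \<equiv> degree (\<sigma> [:0, 1:])"

lemma degree_endo: "degree (\<sigma> a) = degree a * d"
  unfolding endo_eq_pcompose[of a] by (rule degree_pcompose)

lemma endo_nonzero: "a \<noteq> 0 \<Longrightarrow> \<sigma> a \<noteq> 0"
  using degree_endo_y_gt_1 lead_coeff_comp[of "\<sigma> [:0, 1:]" a]
  by (auto simp: endo_eq_pcompose[of a])

lemma degree_funpow_endo: "degree ((\<sigma> ^^ k) a) = degree a * d ^ k"
proof (induction k)
  case (Suc k)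
  then show ?case using degree_endo[of "(\<sigma> ^^ k) a"] by simp
qed simp

lemma funpow_endo_nonzero: "a \<noteq> 0 \<Longrightarrow> (\<sigma> ^^ k) a \<noteq> 0"
  by (induction k) (simp_all add: endo_nonzero)

lemma funpow_endo_diff: "(\<sigma> ^^ k) (a - b) = (\<sigma> ^^ k) a - (\<sigma> ^^ k) b"
  by (induction k) (simp_all add: endo_diff)

lemma funpow_endo_smult: "(\<sigma> ^^ k) (smult c a) = smult c ((\<sigma> ^^ k) a)"
  by (induction k) (simp_all add: endo_smult)

text \<open>Only \<open>\<sigma>\<close> raises the \<open>x\<close>-degree; \<open>\<delta>\<close> contributes to lower degrees only.\<close>
lemma funpow_xmul_leading:
  "degree ((xmul ^^ k) q) \<le> degree q + k \<and>
   coeff ((xmul ^^ k) q) (degree q + k) = (\<sigma> ^^ k) (lead_coeff q)"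
proof (induction k)
  case (Suc k)
  then have le: "degree ((xmul ^^ k) q) \<le> degree q + k" by simp
  have "degree ((xmul ^^ Suc k) q) \<le> Suc (degree q + k)"
    using le by (intro degree_le) (auto simp: coeff_xmul coeff_eq_0 split: nat.split)
  moreover have "coeff ((xmul ^^ k) q) (Suc (degree q + k)) = 0"
    using le by (simp add: coeff_eq_0)
  moreover have "coeff (xmul p) (Suc j) = \<sigma> (coeff p j) + \<delta> (coeff p (Suc j))" for p j
    by (simp add: coeff_xmul)
  ultimately show ?case
    using Suc by simp
qed simp

lemma coeff_ore_mult_high:
  assumes "degree p + degree q \<le> k"
  shows "coeff (p \<star> q) k =
    (if k = degree p + degree q then lead_coeff p * (\<sigma> ^^ degree p) (lead_coeff q) else 0)"
proof -
  have "coeff p i * coeff ((xmul ^^ i) q) k =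
      (if i = degree p \<and> k = degree p + degree q
       then lead_coeff p * (\<sigma> ^^ degree p) (lead_coeff q) else 0)" if "i \<le> degree p" for i
  proof (cases "i = degree p \<and> k = degree p + degree q")
    case False
    with that assms have "degree ((xmul ^^ i) q) < k"
      using funpow_xmul_leading[of i q] by auto
    then have "coeff ((xmul ^^ i) q) k = 0" by (rule coeff_eq_0)
    then show ?thesis unfolding if_not_P[OF False] by simp
  qed (use funpow_xmul_leading[of "degree p" q] in \<open>simp add: add.commute\<close>)
  then show ?thesis
    by (simp add: ore_mult_conv_xmul coeff_sum)
qed

lemma degree_ore_mult:
  assumes "p \<noteq> 0" "q \<noteq> 0"
  shows "degree (p \<star> q) = degree p + degree q"
proof (rule antisym)
  show "degree (p \<star> q) \<le> degree p + degree q"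
    by (rule degree_le) (simp add: coeff_ore_mult_high)
  show "degree p + degree q \<le> degree (p \<star> q)"
    using assms by (intro le_degree) (simp add: coeff_ore_mult_high funpow_endo_nonzero)
qed

lemma lead_coeff_ore_mult:
  assumes "p \<noteq> 0" "q \<noteq> 0"
  shows "lead_coeff (p \<star> q) = lead_coeff p * (\<sigma> ^^ degree p) (lead_coeff q)"
  using assms by (simp add: degree_ore_mult coeff_ore_mult_high)

lemma ore_mult_nonzero: "p \<noteq> 0 \<Longrightarrow> q \<noteq> 0 \<Longrightarrow> p \<star> q \<noteq> 0"
  using lead_coeff_ore_mult[of p q] funpow_endo_nonzero[of "lead_coeff q" "degree p"] by auto

lemma ore_power_nonzero_degree:
  assumes "P \<noteq> 0"
  shows "P ^\<star> k \<noteq> 0 \<and> degree (P ^\<star> k) = k * degree P"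
  by (induction k) (simp_all add: ore_power_Suc ore_mult_nonzero degree_ore_mult assms)

lemma lead_coeff_commuting:
  assumes "P \<noteq> 0" "Q \<noteq> 0" "Q \<star> P = P \<star> Q"
  shows "lead_coeff Q * (\<sigma> ^^ degree Q) (lead_coeff P) = lead_coeff P * (\<sigma> ^^ degree P) (lead_coeff Q)"
  using assms by (metis lead_coeff_ore_mult)

lemma degree_twisted_commuting:
  assumes "l \<noteq> 0" "a \<noteq> 0" "a * (\<sigma> ^^ m) l = l * (\<sigma> ^^ n) a"
  shows "degree a + degree l * d ^ m = degree l + degree a * d ^ n"
proof -
  have "degree (a * (\<sigma> ^^ m) l) = degree (l * (\<sigma> ^^ n) a)"
    using assms(3) by simp
  then show ?thesis
    using assms(1,2) by (simp add: degree_mult_eq funpow_endo_nonzero degree_funpow_endo)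
qed

lemma twisted_commuting_unique:
  assumes "n \<ge> 1" "l \<noteq> 0"
    and a: "a \<noteq> 0" "a * (\<sigma> ^^ m) l = l * (\<sigma> ^^ n) a"
    and b: "b \<noteq> 0" "b * (\<sigma> ^^ m) l = l * (\<sigma> ^^ n) b"
  shows "\<exists>c. a = smult c b"
proof -
  have "d ^ n \<noteq> 1"
    using assms(1) degree_endo_y_gt_1 by simp
  then have "int (d ^ n) \<noteq> 1"
    by (simp only: of_nat_eq_1_iff not_False_eq_True)
  then have same_degree: "degree a' = degree b"
    if "a' \<noteq> 0" "a' * (\<sigma> ^^ m) l = l * (\<sigma> ^^ n) a'" for a'
  proof -
    have "(int (degree a') - int (degree b)) * (int (d ^ n) - 1) = 0"
      using arg_cong[OF degree_twisted_commuting[OF assms(2) that], of int]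
        arg_cong[OF degree_twisted_commuting[OF assms(2) b], of int]
      by (simp add: algebra_simps)
    with \<open>int (d ^ n) \<noteq> 1\<close> show ?thesis by simp
  qed
  define c where "c = lead_coeff a / lead_coeff b"
  define a' where "a' = a - smult c b"
  have a': "a' * (\<sigma> ^^ m) l = l * (\<sigma> ^^ n) a'"
    using a b by (simp add: a'_def funpow_endo_diff funpow_endo_smult algebra_simps)
  have "a' = 0"
  proof (rule ccontr)
    assume "a' \<noteq> 0"
    then have "degree a' = degree b" using a' by (rule same_degree)
    moreover have "coeff a' (degree b) = 0"
      using same_degree[OF a] b(1) by (simp add: a'_def c_def)
    ultimately show False using \<open>a' \<noteq> 0\<close> by (metis leading_coeff_0_iff)
  qed
  then show ?thesis by (auto simp: a'_def)
qed

lemma centralizer_lead_coeff_multiple: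
  assumes "degree P \<ge> 1" "Q \<in> ore_centralizer \<sigma> \<delta> P" "Q \<noteq> 0"
    and "degree Q = k * degree P"
  shows "\<exists>c. lead_coeff Q = smult c (lead_coeff (P ^\<star> k))"
proof -
  have "P \<noteq> 0" using assms(1) by auto
  then have Pk: "P ^\<star> k \<noteq> 0" "degree (P ^\<star> k) = degree Q"
    using ore_power_nonzero_degree[of P k] assms(4) by auto
  have "Q \<star> P = P \<star> Q"
    using assms(2) by (simp add: ore_centralizer_def)
  then have "lead_coeff Q * (\<sigma> ^^ degree Q) (lead_coeff P)
      = lead_coeff P * (\<sigma> ^^ degree P) (lead_coeff Q)"
    by (rule lead_coeff_commuting[OF \<open>P \<noteq> 0\<close> assms(3)])
  moreover have "lead_coeff (P ^\<star> k) * (\<sigma> ^^ degree Q) (lead_coeff P)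
      = lead_coeff P * (\<sigma> ^^ degree P) (lead_coeff (P ^\<star> k))"
    using lead_coeff_commuting[OF \<open>P \<noteq> 0\<close> Pk(1) ore_power_commute] Pk(2) by simp
  ultimately show ?thesis
    using \<open>P \<noteq> 0\<close> assms(3) Pk(1)
    by (intro twisted_commuting_unique[OF assms(1), of "lead_coeff P" _ "degree Q"]) simp_all
qed

lemma centralizer_degree_reduction:
  assumes "degree P \<ge> 1" "Q \<in> ore_centralizer \<sigma> \<delta> P" "Q \<noteq> 0"
    and "degree P dvd degree Q"
  obtains c k where "Q - smult [:c:] (P ^\<star> k) \<in> ore_centralizer \<sigma> \<delta> P"
    and "Q - smult [:c:] (P ^\<star> k) = 0 \<or> degree (Q - smult [:c:] (P ^\<star> k)) < degree Q"
proof -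
  obtain k where k: "degree Q = k * degree P"
    using assms(4) by (metis dvdE mult.commute)
  obtain c where c: "lead_coeff Q = smult c (lead_coeff (P ^\<star> k))"
    using centralizer_lead_coeff_multiple[OF assms(1-3) k] by blast
  have "c \<noteq> 0" using c assms(3) by auto
  moreover have "P \<noteq> 0" using assms(1) by auto
  then have "degree (P ^\<star> k) = degree Q"
    using ore_power_nonzero_degree[of P k] k by simp
  ultimately have "Q - smult [:c:] (P ^\<star> k) = 0 \<or> degree (Q - smult [:c:] (P ^\<star> k)) < degree Q"
    using c by (auto intro!: degree_diff_less_if_lead_coeff_eq simp: degree_smult_eq)
  with centralizer_diff_smult_power[OF assms(2)] show ?thesis by (rule that)
qed

lemma centralizer_subset_K_poly_in:
  assumes "degree P \<ge> 1"
    and dvd: "\<And>Q. Q \<in> ore_centralizer \<sigma> \<delta> P \<Longrightarrow> Q \<noteq> 0 \<Longrightarrow> degree P dvd degree Q"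
  shows "ore_centralizer \<sigma> \<delta> P \<subseteq> ore_K_poly_in \<sigma> \<delta> P"
proof
  fix Q assume "Q \<in> ore_centralizer \<sigma> \<delta> P"
  then show "Q \<in> ore_K_poly_in \<sigma> \<delta> P"
  proof (induction "degree Q" arbitrary: Q rule: less_induct)
    case less
    show ?case
    proof (cases "Q = 0")
      case True
      then show ?thesis by (simp add: K_poly_in_zero)
    next
      case False
      then obtain c k where
        C: "Q - smult [:c:] (P ^\<star> k) \<in> ore_centralizer \<sigma> \<delta> P" and
        deg: "Q - smult [:c:] (P ^\<star> k) = 0 \<or> degree (Q - smult [:c:] (P ^\<star> k)) < degree Q"
        using centralizer_degree_reduction[OF assms(1) less.prems False dvd[OF less.prems False]]
        by blast
      from deg have "Q - smult [:c:] (P ^\<star> k) \<in> ore_K_poly_in \<sigma> \<delta> P"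
        using less.hyps[OF _ C] by (auto simp: K_poly_in_zero)
      from K_poly_in_add_smult_power[OF this, of c k] show ?thesis by simp
    qed
  qed
qed

lemma xy_power_leading:
  "monom 1 n \<star> [:[:0, 1:] ^ n:] \<noteq> 0"
  "degree (monom 1 n \<star> [:[:0, 1:] ^ n:]) = n"
  "lead_coeff (monom 1 n \<star> [:[:0, 1:] ^ n:]) = (\<sigma> ^^ n) ([:0, 1:] ^ n)"
  using lead_coeff_ore_mult[of "monom 1 n" "[:[:0, 1:] ^ n:]"]
  by (simp_all add: ore_mult_nonzero degree_ore_mult degree_monom_eq)

lemma degree_dvd_if_commutes_xy_power:
  assumes "n \<ge> 1"
    and "Q \<in> ore_centralizer \<sigma> \<delta> (monom 1 n \<star> [:[:0, 1:] ^ n:])" "Q \<noteq> 0"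
  shows "n dvd degree Q"
proof -
  define P where "P = monom 1 n \<star> [:[:0, 1:] ^ n:]"
  have lP: "lead_coeff P \<noteq> 0" "degree (lead_coeff P) = n * d ^ n"
    using xy_power_leading[of n]
    by (simp_all add: P_def degree_funpow_endo degree_power_eq funpow_endo_nonzero)
  have "Q \<star> P = P \<star> Q"
    using assms(2) by (simp add: P_def ore_centralizer_def)
  then have "lead_coeff Q * (\<sigma> ^^ degree Q) (lead_coeff P) = lead_coeff P * (\<sigma> ^^ n) (lead_coeff Q)"
    using lead_coeff_commuting[of P Q] xy_power_leading[of n] assms(3) by (simp add: P_def)
  then have "degree (lead_coeff Q) + n * d ^ n * d ^ degree Q = n * d ^ n + degree (lead_coeff Q) * d ^ n"
    using degree_twisted_commuting[OF lP(1)] assms(3) lP(2) by simp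
  from arg_cong[OF this, of int]
  have "int ((d ^ n - 1) * degree (lead_coeff Q)) = int (n * (d ^ degree Q - 1) * d ^ n)"
    using degree_endo_y_gt_1 by (simp add: of_nat_diff algebra_simps)
  then have "(d ^ n - 1) * degree (lead_coeff Q) = n * (d ^ degree Q - 1) * d ^ n"
    by (simp only: of_nat_eq_iff)
  then have "d ^ n - 1 dvd n * (d ^ degree Q - 1) * d ^ n"
    by (rule dvdI[OF sym])
  moreover have "coprime (d ^ n - 1) (d ^ n)"
    using degree_endo_y_gt_1 by (intro coprime_diff_one_left_nat) simp
  ultimately have "d ^ n - 1 dvd n * (d ^ degree Q - 1)"
    by (simp only: coprime_dvd_mult_left_iff)
  moreover have "d \<ge> 2"
    using degree_endo_y_gt_1 by simp
  ultimately show ?thesis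
    using dvd_exponent_if_power_minus_one_dvd assms(1) by blast
qed

end

theorem proposition5p8:
  fixes \<sigma> \<delta> :: "'a::field poly \<Rightarrow> 'a poly" and n :: nat
  assumes "K_alg_endo \<sigma>"
    and "degree (\<sigma> [:0, 1:]) > 1"
    and "K_linear_sigma_derivation \<sigma> \<delta>"
    and "n \<ge> 1"
  shows "ore_centralizer \<sigma> \<delta> (ore_mult \<sigma> \<delta> (monom 1 n) [:[:0, 1:] ^ n:])
       = ore_K_poly_in \<sigma> \<delta> (ore_mult \<sigma> \<delta> (monom 1 n) [:[:0, 1:] ^ n:])"
proof -
  interpret ore_extension_deg \<sigma> \<delta>
    using assms(1-3) by unfold_locales
  have "degree (monom 1 n \<star> [:[:0, 1:] ^ n:]) \<ge> 1"
    using xy_power_leading(2) assms(4) by simp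
  then show ?thesis
  proof (intro subset_antisym centralizer_subset_K_poly_in K_poly_in_subset_centralizer)
    show "degree (monom 1 n \<star> [:[:0, 1:] ^ n:]) dvd degree Q"
      if "Q \<in> ore_centralizer \<sigma> \<delta> (monom 1 n \<star> [:[:0, 1:] ^ n:])" "Q \<noteq> 0" for Q
      using degree_dvd_if_commutes_xy_power[OF assms(4) that] by (simp add: xy_power_leading)
  qed
qed

end
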